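(* Let $p\in(1/2,1)$, $\alpha=p/(1-p)$ and $V\in\{G,B\}$. Then $$\lim_{\epsilon\to1}\mathbb{P}_{Y\text{-cas}}(\epsilon)=\frac{1}{e^{t}-t},$$ where $t=\dfrac{\log\alpha}{\alpha-1}$ if $V=G$ and $t=\dfrac{\alpha\log\alpha}{\alpha-1}$ if $V=B$.
   Context: Observational learning model: an item has true value $V\in\{G,B\}$; agents arrive sequentially, each receives a private binary signal equal to the "correct" signal with probability $p\in(1/2,1)$, and each agent is independently fake with probability $\epsilon\in[0,1)$ (a fake agent's recorded action is always $Y$ = buy). Define $a=p+(1-p)\epsilon$, $b=p(1-\epsilon)$ and $\eta=\eta(\epsilon)=\log\big(a/(1-b)\big)/\log\alpha\in(0,1]$. Given $V$, let $p_f=a$ if $V=G$ and $p_f=1-b$ if $V=B$. Before any cascade, the agents' sufficient statistic $h$ evolves as the following random walk: $h_0=0$ and, independently at each step, $h$ increases by $\eta$ with probability $p_f$ (an observed $Y$) or decreases by $1$ with probability $1-p_f$ (an observed $N$); the walk is stopped the first time it leaves $[-1,1]$. Leaving above $1$ is a $Y$ cascade, leaving below $-1$ an $N$ cascade. $\mathbb{P}_{Y\text{-cas}}(\epsilon)$ denotes the probability (given $V$) that the walk leaves $[-1,1]$ above $1$. *)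

theory Defs
  imports Complex_Main
begin

datatype item_value = G | B

definition alpha :: "real \<Rightarrow> real" where
  "alpha p = p / (1 - p)"

definition aa :: "real \<Rightarrow> real \<Rightarrow> real" where
  "aa p \<epsilon> = p + (1 - p) * \<epsilon>"

definition bb :: "real \<Rightarrow> real \<Rightarrow> real" where
  "bb p \<epsilon> = p * (1 - \<epsilon>)"

definition eta :: "real \<Rightarrow> real \<Rightarrow> real" where
  "eta p \<epsilon> = ln (aa p \<epsilon> / (1 - bb p \<epsilon>)) / ln (alpha p)"

text \<open>Probability of an observed Y given the true value V.\<close>
definition pf :: "real \<Rightarrow> real \<Rightarrow> item_value \<Rightarrow> real" where
  "pf p \<epsilon> V = (case V of G \<Rightarrow> aa p \<epsilon> | B \<Rightarrow> 1 - bb p \<epsilon>)"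

text \<open>A finite sequence of observed actions (True = Y, False = N) and the
  resulting value of the random walk h started at 0.\<close>
definition walk_pos :: "real \<Rightarrow> bool list \<Rightarrow> real" where
  "walk_pos \<eta> w = sum_list (map (\<lambda>x. if x then \<eta> else -1) w)"

text \<open>The path w is exactly the history up to the first exit from [-1,1],
  and the exit happens above 1 (a Y cascade).\<close>
definition Y_exit :: "real \<Rightarrow> bool list \<Rightarrow> bool" where
  "Y_exit \<eta> w \<longleftrightarrow>
     (\<forall>k < length w. \<bar>walk_pos \<eta> (take k w)\<bar> \<le> 1) \<and> walk_pos \<eta> w > 1"

definition path_prob :: "real \<Rightarrow> bool list \<Rightarrow> real" where
  "path_prob q w = prod_list (map (\<lambda>x. if x then q else 1 - q) w)"

text \<open>P_{Y-cas}(epsilon): probability (given V) that the walk leaves [-1,1]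
  above 1, i.e. the total probability of all (disjoint) stopped paths ending
  in a Y cascade, summed by path length.\<close>
definition PYcas :: "real \<Rightarrow> item_value \<Rightarrow> real \<Rightarrow> real" where
  "PYcas p V \<epsilon> =
     (\<Sum>n. \<Sum>w \<in> {w. length w = n \<and> Y_exit (eta p \<epsilon>) w}. path_prob (pf p \<epsilon> V) w)"

end

theory Submission
  imports Defs
begin

(* Let G(x) be the probability that the walk, started at x, leaves [-1,1] upwards, where an
   up-step +\<eta> has probability P.  From x in [0,\<eta>) the walk either climbs past 1 in about 1/\<eta>
   up-steps, or it steps down once into [-1,0) and must then climb back without a further
   down-step; it re-enters [0,\<eta>) at a point T that does not depend on when the down-step
   happened.  Hence G(x) = P^n + n (1 - P) P^K G(T) with n, K within 1 of 1/\<eta>, and the affine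
   self-bounds this gives on [0,\<eta>) squeeze G(0) between their fixpoints e / (1 - r).
   As \<epsilon> \<rightarrow> 1 we have \<eta> \<rightarrow> 0 and 1 - P = c (1 - \<epsilon>), with c the probability of a low
   signal and c (1 - \<epsilon>) / \<eta> \<rightarrow> t.  So P^(1/\<eta>) \<rightarrow> exp (-t) and n (1 - P) P^K \<rightarrow> t exp (-t),
   and both bounds tend to exp (-t) / (1 - t exp (-t)) = 1 / (exp t - t). *)

lemma crossing_indices:
  assumes "0 < \<eta>" "\<eta> \<le> 1" "0 \<le> x" "x < \<eta>"
  obtains n K :: nat where
    "\<forall>i<n. x + real i * \<eta> \<le> 1" "1 < x + real n * \<eta>"
    "\<forall>i<K. x + real i * \<eta> < 1" "1 \<le> x + real K * \<eta>" "x + real K * \<eta> - 1 < \<eta>"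
    "\<bar>real n - 1 / \<eta>\<bar> \<le> 1" "\<bar>real K - 1 / \<eta>\<bar> \<le> 1"
proof -
  define z where "z = (1 - x) / \<eta>"
  have "0 \<le> z"
    using assms by (simp add: z_def)
  have z_bounds: "1 / \<eta> - 1 < z" "z \<le> 1 / \<eta>"
    using assms by (simp_all add: z_def field_simps)
  have shift: "x + r * \<eta> - 1 = (r - z) * \<eta>" for r
    using assms(1) by (simp add: z_def field_simps)
  have le_iff: "x + r * \<eta> \<le> 1 \<longleftrightarrow> r \<le> z" and less_iff: "x + r * \<eta> < 1 \<longleftrightarrow> r < z" for r
    using shift[of r] mult_le_0_iff[of "r - z" \<eta>] mult_less_0_iff[of "r - z" \<eta>] assms(1) by linarith+
  define n where "n = nat \<lfloor>z\<rfloor> + 1"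
  define K where "K = nat \<lceil>z\<rceil>"
  have n: "z < real n" "real n \<le> z + 1" and K: "z \<le> real K" "real K < z + 1"
    using \<open>0 \<le> z\<close> by (simp_all add: n_def K_def) linarith+
  show ?thesis
  proof (rule that)
    show "\<forall>i<n. x + real i * \<eta> \<le> 1"
      using \<open>0 \<le> z\<close> by (auto simp: le_iff n_def) linarith
    show "\<forall>i<K. x + real i * \<eta> < 1"
      using \<open>0 \<le> z\<close> by (auto simp: less_iff K_def) linarith
    show "x + real K * \<eta> - 1 < \<eta>"
      using shift[of "real K"] K assms(1) by (simp add: mult_less_cancel_right)
    show "1 < x + real n * \<eta>"
      using n le_iff[of "real n"] by linarith
    show "1 \<le> x + real K * \<eta>"
      using K less_iff[of "real K"] by linarith
    show "\<bar>real n - 1 / \<eta>\<bar> \<le> 1" "\<bar>real K - 1 / \<eta>\<bar> \<le> 1"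
      unfolding abs_le_iff using n K z_bounds by linarith+
  qed
qed

lemma power_between_powr:
  assumes "0 < P" "P \<le> 1" "\<bar>real n - u\<bar> \<le> 1"
  shows "P powr (u + 1) \<le> P ^ n" "P ^ n \<le> P powr (u - 1)"
proof -
  have eq: "P ^ n = P powr real n"
    using assms(1) by (rule powr_realpow[symmetric])
  show "P powr (u + 1) \<le> P ^ n" "P ^ n \<le> P powr (u - 1)"
    unfolding eq using assms by (auto intro!: powr_mono')
qed

lemma le_fixpoint_of_affine_self_bound:
  fixes f :: "'a \<Rightarrow> real"
  assumes "bdd_above (f ` A)" "0 \<le> r" "r < 1"
    and step: "\<And>x. x \<in> A \<Longrightarrow> \<exists>y\<in>A. f x \<le> e + r * f y" and "x \<in> A"
  shows "f x \<le> e / (1 - r)"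
proof -
  let ?M = "Sup (f ` A)"
  have le_M: "f y \<le> ?M" if "y \<in> A" for y
    using assms(1) that by (simp add: cSup_upper)
  have "?M \<le> e + r * ?M"
  proof (rule cSUP_least)
    show "A \<noteq> {}"
      using \<open>x \<in> A\<close> by blast
    show "f y \<le> e + r * ?M" if "y \<in> A" for y
      using step[OF that] le_M mult_left_mono[OF le_M \<open>0 \<le> r\<close>] by fastforce
  qed
  then have "?M \<le> e / (1 - r)"
    using \<open>r < 1\<close> by (simp add: pos_le_divide_eq algebra_simps)
  then show ?thesis
    using le_M[OF \<open>x \<in> A\<close>] by linarith
qed

lemma fixpoint_le_of_affine_self_bound:
  fixes f :: "'a \<Rightarrow> real"
  assumes "bdd_below (f ` A)" "0 \<le> r" "r < 1"
    and step: "\<And>x. x \<in> A \<Longrightarrow> \<exists>y\<in>A. e + r * f y \<le> f x" and "x \<in> A"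
  shows "e / (1 - r) \<le> f x"
proof -
  have "- f x \<le> - e / (1 - r)"
  proof (rule le_fixpoint_of_affine_self_bound[where f = "\<lambda>x. - f x"])
    obtain m where "\<forall>y\<in>A. m \<le> f y"
      using assms(1) by (auto simp: bdd_below_def)
    then show "bdd_above ((\<lambda>x. - f x) ` A)"
      by (intro bdd_aboveI2[where M = "- m"]) auto
    show "\<exists>y\<in>A. - f x \<le> - e + r * - f y" if "x \<in> A" for x
      using step[OF that] by (auto simp: algebra_simps)
  qed (use assms in auto)
  then show ?thesis
    by simp
qed

lemma ln_one_minus_div_tendsto:
  fixes s :: "'a \<Rightarrow> real"
  assumes "(s \<longlongrightarrow> 0) F" "eventually (\<lambda>x. s x \<noteq> 0) F"
  shows "((\<lambda>x. ln (1 - s x) / s x) \<longlongrightarrow> -1) F"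
proof -
  have "((\<lambda>y::real. (ln y - ln 1) / (y - 1)) \<longlongrightarrow> 1) (at 1)"
    using DERIV_ln[of 1] by (simp add: has_field_derivative_iff)
  moreover have "filterlim (\<lambda>x. 1 - s x) (at 1) F"
    using assms by (auto intro!: filterlim_atI tendsto_eq_intros)
  ultimately have "((\<lambda>x. ln (1 - s x) / (- s x)) \<longlongrightarrow> 1) F"
    by (auto dest: filterlim_compose)
  then show ?thesis
    using tendsto_minus by fastforce
qed

lemma powr_one_minus_tendsto:
  fixes a s :: "'a \<Rightarrow> real"
  assumes "((\<lambda>x. a x * s x) \<longlongrightarrow> t) F" "(s \<longlongrightarrow> 0) F" "eventually (\<lambda>x. 0 < s x) F"
  shows "((\<lambda>x. (1 - s x) powr a x) \<longlongrightarrow> exp (- t)) F"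
proof -
  have "((\<lambda>x. exp (a x * s x * (ln (1 - s x) / s x))) \<longlongrightarrow> exp (t * -1)) F"
    using assms by (intro tendsto_intros ln_one_minus_div_tendsto) (auto elim: eventually_mono)
  moreover have "eventually (\<lambda>x. exp (a x * s x * (ln (1 - s x) / s x)) = (1 - s x) powr a x) F"
    using assms(3) order_tendstoD(2)[OF assms(2) zero_less_one]
    by eventually_elim (simp add: powr_def)
  ultimately show ?thesis
    by (simp add: tendsto_cong)
qed

lemma mult_exp_minus_less_1: "t * exp (- t) < (1::real)"
  using exp_gt_self[of t] by (simp add: exp_minus field_simps)

section \<open>Exit probabilities of the stopped walk\<close>

fun exits_above :: "real \<Rightarrow> real \<Rightarrow> bool list \<Rightarrow> bool" where
  "exits_above \<eta> x [] \<longleftrightarrow> 1 < x"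
| "exits_above \<eta> x (b # w) \<longleftrightarrow> \<bar>x\<bar> \<le> 1 \<and> exits_above \<eta> (x + (if b then \<eta> else -1)) w"

lemma walk_pos_Nil [simp]: "walk_pos \<eta> [] = 0"
  by (simp add: walk_pos_def)

lemma walk_pos_Cons [simp]: "walk_pos \<eta> (b # w) = (if b then \<eta> else -1) + walk_pos \<eta> w"
  by (simp add: walk_pos_def)

lemma path_prob_Cons [simp]: "path_prob P (b # w) = (if b then P else 1 - P) * path_prob P w"
  by (simp add: path_prob_def)

lemma exits_above_iff:
  "exits_above \<eta> x w \<longleftrightarrow>
     (\<forall>k < length w. \<bar>x + walk_pos \<eta> (take k w)\<bar> \<le> 1) \<and> 1 < x + walk_pos \<eta> w"
  by (induction w arbitrary: x) (auto simp: less_Suc_eq_0_disj add.assoc)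

lemma Y_exit_eq_exits_above: "Y_exit \<eta> w \<longleftrightarrow> exits_above \<eta> 0 w"
  by (simp add: Y_exit_def exits_above_iff)

fun exit_prob_at :: "real \<Rightarrow> real \<Rightarrow> nat \<Rightarrow> real \<Rightarrow> real" where
  "exit_prob_at \<eta> P 0 x = (if 1 < x then 1 else 0)"
| "exit_prob_at \<eta> P (Suc n) x =
     (if \<bar>x\<bar> \<le> 1 then P * exit_prob_at \<eta> P n (x + \<eta>) + (1 - P) * exit_prob_at \<eta> P n (x - 1) else 0)"

lemma sum_path_prob_exits_above:
  "(\<Sum>w \<in> {w. length w = n \<and> exits_above \<eta> x w}. path_prob P w) = exit_prob_at \<eta> P n x"
proof (induction n arbitrary: x)
  case 0
  have "{w. length w = 0 \<and> exits_above \<eta> x w} = (if 1 < x then {[]} else {})"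
    by auto
  then show ?case
    by (simp add: path_prob_def)
next
  case (Suc n)
  let ?paths = "\<lambda>y. {w. length w = n \<and> exits_above \<eta> y w}"
  have paths: "{w. length w = Suc n \<and> exits_above \<eta> x w} =
      (if \<bar>x\<bar> \<le> 1 then Cons True ` ?paths (x + \<eta>) \<union> Cons False ` ?paths (x - 1) else {})"
    by (auto simp: length_Suc_conv image_iff split: if_splits)
  have finite: "finite (Cons b ` ?paths y)" for b y
    by (rule finite_imageI, rule finite_subset[OF _ finite_list_length[of n]]) auto
  have sum_Cons: "sum (path_prob P) (Cons b ` ?paths y) = (if b then P else 1 - P) * exit_prob_at \<eta> P n y"
    for b y
    by (simp add: sum.reindex Suc.IH flip: sum_distrib_left del: exits_above.simps)
  have disjoint: "Cons True ` A \<inter> Cons False ` A' = {}" for A A' :: "bool list set"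
    by auto
  show ?case
    unfolding paths by (simp add: sum.union_disjoint[OF finite finite disjoint] sum_Cons)
qed

lemma exit_prob_at_nonneg: "0 \<le> P \<Longrightarrow> P \<le> 1 \<Longrightarrow> 0 \<le> exit_prob_at \<eta> P n x"
  by (induction n arbitrary: x) auto

lemma sum_exit_prob_at_le_1:
  assumes "0 \<le> P" "P \<le> 1"
  shows "(\<Sum>n<N. exit_prob_at \<eta> P n x) \<le> 1"
proof (induction N arbitrary: x)
  case 0
  then show ?case by simp
next
  case (Suc N)
  have "(\<Sum>n<Suc N. exit_prob_at \<eta> P n x) =
      exit_prob_at \<eta> P 0 x + (\<Sum>n<N. exit_prob_at \<eta> P (Suc n) x)"
    by (rule sum.lessThan_Suc_shift)
  also have "\<dots> \<le> 1"
  proof (cases "\<bar>x\<bar> \<le> 1")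
    case True
    have "(\<Sum>n<N. exit_prob_at \<eta> P (Suc n) x) =
        P * (\<Sum>n<N. exit_prob_at \<eta> P n (x + \<eta>)) + (1 - P) * (\<Sum>n<N. exit_prob_at \<eta> P n (x - 1))"
      using True by (simp add: sum.distrib sum_distrib_left)
    also have "\<dots> \<le> P * 1 + (1 - P) * 1"
      using Suc assms by (intro add_mono mult_left_mono) auto
    finally show ?thesis
      using True by simp
  qed simp
  finally show ?case .
qed

definition exit_prob :: "real \<Rightarrow> real \<Rightarrow> real \<Rightarrow> real" where
  "exit_prob \<eta> P x = (\<Sum>n. exit_prob_at \<eta> P n x)"

lemma PYcas_eq_exit_prob: "PYcas p V \<epsilon> = exit_prob (eta p \<epsilon>) (pf p \<epsilon> V) 0"
  by (simp add: PYcas_def exit_prob_def Y_exit_eq_exits_above sum_path_prob_exits_above)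

lemma exit_prob_above: "1 < x \<Longrightarrow> exit_prob \<eta> P x = 1"
  unfolding exit_prob_def by (subst suminf_finite[of "{0}"]) (auto simp: gr0_conv_Suc)

lemma exit_prob_below: "x < -1 \<Longrightarrow> exit_prob \<eta> P x = 0"
proof -
  assume "x < -1"
  then have "exit_prob_at \<eta> P n x = 0" for n
    by (cases n) auto
  then show ?thesis
    by (simp add: exit_prob_def)
qed

context
  fixes \<eta> P :: real
  assumes P_nonneg: "0 \<le> P" and P_le_1: "P \<le> 1"
begin

lemma summable_exit_prob_at: "summable (\<lambda>n. exit_prob_at \<eta> P n x)"
  using P_nonneg P_le_1
  by (intro summableI_nonneg_bounded[where x = 1] exit_prob_at_nonneg sum_exit_prob_at_le_1)

lemma exit_prob_nonneg: "0 \<le> exit_prob \<eta> P x"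
  unfolding exit_prob_def using P_nonneg P_le_1
  by (intro suminf_nonneg summable_exit_prob_at exit_prob_at_nonneg)

lemma exit_prob_le_1: "exit_prob \<eta> P x \<le> 1"
  unfolding exit_prob_def using P_nonneg P_le_1
  by (intro suminf_le_const summable_exit_prob_at sum_exit_prob_at_le_1)

lemma exit_prob_step:
  assumes "\<bar>x\<bar> \<le> 1"
  shows "exit_prob \<eta> P x = P * exit_prob \<eta> P (x + \<eta>) + (1 - P) * exit_prob \<eta> P (x - 1)"
proof -
  have "(\<lambda>n. exit_prob_at \<eta> P (Suc n) x) sums
      (P * exit_prob \<eta> P (x + \<eta>) + (1 - P) * exit_prob \<eta> P (x - 1))"
    unfolding exit_prob_def using assms
    by (simp add: sums_add sums_mult summable_sums summable_exit_prob_at)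
  then have "(\<lambda>n. exit_prob_at \<eta> P n x) sums
      (P * exit_prob \<eta> P (x + \<eta>) + (1 - P) * exit_prob \<eta> P (x - 1) + exit_prob_at \<eta> P 0 x)"
    by (rule sums_Suc)
  then show ?thesis
    unfolding exit_prob_def using assms by (simp add: sums_iff abs_le_iff)
qed

lemma exit_prob_climb:
  assumes "0 < \<eta>" "-1 \<le> y" "\<forall>i<m. y + real i * \<eta> < 0"
  shows "exit_prob \<eta> P y = P ^ m * exit_prob \<eta> P (y + real m * \<eta>)"
  using assms(2,3)
proof (induction m arbitrary: y)
  case 0
  then show ?case by simp
next
  case (Suc m)
  have "y < 0"
    using Suc.prems(2) by auto
  have "exit_prob \<eta> P y = P * exit_prob \<eta> P (y + \<eta>)"
    using exit_prob_step[of y] exit_prob_below[of "y - 1"] Suc.prems(1) \<open>y < 0\<close> by simp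
  also have "exit_prob \<eta> P (y + \<eta>) = P ^ m * exit_prob \<eta> P (y + \<eta> + real m * \<eta>)"
  proof (rule Suc.IH)
    show "-1 \<le> y + \<eta>"
      using Suc.prems(1) assms(1) by simp
    show "\<forall>i<m. y + \<eta> + real i * \<eta> < 0"
    proof (intro allI impI)
      fix i
      assume "i < m"
      then have "y + real (Suc i) * \<eta> < 0"
        using Suc.prems(2) by blast
      then show "y + \<eta> + real i * \<eta> < 0"
        by (simp add: algebra_simps)
    qed
  qed
  finally show ?case
    by (simp add: algebra_simps)
qed

lemma exit_prob_first_descent:
  assumes "\<forall>i<n. \<bar>x + real i * \<eta>\<bar> \<le> 1"
  shows "exit_prob \<eta> P x =
    (\<Sum>i<n. P ^ i * (1 - P) * exit_prob \<eta> P (x + real i * \<eta> - 1)) + P ^ n * exit_prob \<eta> P (x + real n * \<eta>)"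
  using assms
proof (induction n arbitrary: x)
  case 0
  then show ?case by simp
next
  case (Suc n)
  have IH: "exit_prob \<eta> P (x + \<eta>) =
      (\<Sum>i<n. P ^ i * (1 - P) * exit_prob \<eta> P (x + real (Suc i) * \<eta> - 1))
      + P ^ n * exit_prob \<eta> P (x + real (Suc n) * \<eta>)"
  proof -
    have "\<bar>x + \<eta> + real i * \<eta>\<bar> \<le> 1" if "i < n" for i
      using Suc.prems[rule_format, of "Suc i"] that by (simp add: algebra_simps)
    then show ?thesis
      using Suc.IH[of "x + \<eta>"] by (simp add: algebra_simps)
  qed
  have "exit_prob \<eta> P x = P * exit_prob \<eta> P (x + \<eta>) + (1 - P) * exit_prob \<eta> P (x - 1)"
    using exit_prob_step Suc.prems[rule_format, of 0] by simp
  also have "\<dots> = (\<Sum>i<Suc n. P ^ i * (1 - P) * exit_prob \<eta> P (x + real i * \<eta> - 1))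
      + P ^ Suc n * exit_prob \<eta> P (x + real (Suc n) * \<eta>)"
    unfolding IH sum.lessThan_Suc_shift by (simp add: sum_distrib_left algebra_simps)
  finally show ?case .
qed

lemma exit_prob_renewal:
  assumes "0 < \<eta>" "0 \<le> x"
    and below_n: "\<forall>i<n. x + real i * \<eta> \<le> 1" and above_n: "1 < x + real n * \<eta>"
    and below_K: "\<forall>i<K. x + real i * \<eta> < 1" and above_K: "1 \<le> x + real K * \<eta>"
  shows "exit_prob \<eta> P x = P ^ n + real n * (1 - P) * P ^ K * exit_prob \<eta> P (x + real K * \<eta> - 1)"
proof -
  let ?T = "x + real K * \<eta> - 1"
  have descent: "P ^ i * (1 - P) * exit_prob \<eta> P (x + real i * \<eta> - 1) = (1 - P) * P ^ K * exit_prob \<eta> P ?T"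
    if "i < n" for i
  proof -
    have "real i * \<eta> \<le> real K * \<eta>"
      using below_n that above_K by fastforce
    then have "i \<le> K"
      using \<open>0 < \<eta>\<close> by simp
    have "\<forall>j<K - i. x + real i * \<eta> - 1 + real j * \<eta> < 0"
    proof (intro allI impI)
      fix j
      assume "j < K - i"
      then have "x + real (i + j) * \<eta> < 1"
        using below_K by (simp only: less_diff_conv)
      then show "x + real i * \<eta> - 1 + real j * \<eta> < 0"
        by (simp add: algebra_simps)
    qed
    then have "exit_prob \<eta> P (x + real i * \<eta> - 1) = P ^ (K - i) * exit_prob \<eta> P ?T"
      using exit_prob_climb[of "x + real i * \<eta> - 1" "K - i"] \<open>0 < \<eta>\<close> \<open>0 \<le> x\<close> \<open>i \<le> K\<close>
      by (simp add: of_nat_diff algebra_simps)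
    then show ?thesis
      using \<open>i \<le> K\<close> by (simp add: power_add[symmetric])
  qed
  have "\<bar>x + real i * \<eta>\<bar> \<le> 1" if "i < n" for i
    using below_n that \<open>0 < \<eta>\<close> \<open>0 \<le> x\<close> by simp
  then have "exit_prob \<eta> P x =
      (\<Sum>i<n. P ^ i * (1 - P) * exit_prob \<eta> P (x + real i * \<eta> - 1)) + P ^ n * exit_prob \<eta> P (x + real n * \<eta>)"
    by (intro exit_prob_first_descent) simp
  also have "\<dots> = (\<Sum>i<n. (1 - P) * P ^ K * exit_prob \<eta> P ?T) + P ^ n"
    unfolding exit_prob_above[OF above_n] mult_1_right
    by (intro arg_cong[where f = "\<lambda>s. s + P ^ n"] sum.cong refl descent) simp
  also have "\<dots> = real n * (1 - P) * P ^ K * exit_prob \<eta> P ?T + P ^ n"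
    by simp
  finally show ?thesis
    by simp
qed

end

section \<open>Renewal bounds and their small-step limit\<close>

lemma exit_prob_cycle_bounds:
  assumes P: "0 < P" "P < 1" and \<eta>: "0 < \<eta>" "\<eta> \<le> 1" and x: "0 \<le> x" "x < \<eta>"
  obtains T where "0 \<le> T" "T < \<eta>"
    "P powr (1/\<eta> + 1) + (1/\<eta> - 1) * (1 - P) * P powr (1/\<eta> + 1) * exit_prob \<eta> P T \<le> exit_prob \<eta> P x"
    "exit_prob \<eta> P x \<le> P powr (1/\<eta> - 1) + (1/\<eta> + 1) * (1 - P) * P powr (1/\<eta> - 1) * exit_prob \<eta> P T"
proof -
  obtain n K :: nat where
    n: "\<forall>i<n. x + real i * \<eta> \<le> 1" "1 < x + real n * \<eta>" and
    K: "\<forall>i<K. x + real i * \<eta> < 1" "1 \<le> x + real K * \<eta>" "x + real K * \<eta> - 1 < \<eta>" and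
    n_approx: "\<bar>real n - 1/\<eta>\<bar> \<le> 1" and K_approx: "\<bar>real K - 1/\<eta>\<bar> \<le> 1"
    by (rule crossing_indices[OF \<eta> x])
  define T where "T = x + real K * \<eta> - 1"
  have renewal: "exit_prob \<eta> P x = P ^ n + real n * (1 - P) * P ^ K * exit_prob \<eta> P T"
    unfolding T_def using P \<eta> x n K by (intro exit_prob_renewal) auto
  have "0 \<le> exit_prob \<eta> P T"
    using P by (intro exit_prob_nonneg) auto
  have n_power: "P powr (1/\<eta> + 1) \<le> P ^ n" "P ^ n \<le> P powr (1/\<eta> - 1)"
    and K_power: "P powr (1/\<eta> + 1) \<le> P ^ K" "P ^ K \<le> P powr (1/\<eta> - 1)"
    using power_between_powr[OF P(1) less_imp_le[OF P(2)]] n_approx K_approx by auto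
  have "0 \<le> 1/\<eta> - 1" "1/\<eta> - 1 \<le> real n" "real n \<le> 1/\<eta> + 1"
    using n_approx \<eta> by (auto simp: abs_le_iff)
  then have "(1/\<eta> - 1) * (1 - P) * P powr (1/\<eta> + 1) \<le> real n * (1 - P) * P ^ K"
    and "real n * (1 - P) * P ^ K \<le> (1/\<eta> + 1) * (1 - P) * P powr (1/\<eta> - 1)"
    using P K_power by (auto intro!: mult_mono)
  then show ?thesis
    using n_power \<open>0 \<le> exit_prob \<eta> P T\<close> K(2,3)
    by (intro that[of T]) (auto simp: renewal T_def intro!: add_mono mult_right_mono)
qed

(* The fixpoint e / (1 - r) of the affine self-bounds of exit_prob_cycle_bounds, with
   e = P powr a and r = b (1 - P) P powr a. *)
definition renewal_bound :: "real \<Rightarrow> real \<Rightarrow> real \<Rightarrow> real" where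
  "renewal_bound a b P = P powr a / (1 - b * (1 - P) * P powr a)"

lemma renewal_bound_tendsto:
  fixes a b s :: "'a \<Rightarrow> real"
  assumes "((\<lambda>x. a x * s x) \<longlongrightarrow> t) F" "((\<lambda>x. b x * s x) \<longlongrightarrow> t) F"
    and "(s \<longlongrightarrow> 0) F" "eventually (\<lambda>x. 0 < s x) F"
  shows "((\<lambda>x. renewal_bound (a x) (b x) (1 - s x)) \<longlongrightarrow> 1 / (exp t - t)) F"
proof -
  have "((\<lambda>x. (1 - s x) powr a x / (1 - b x * s x * (1 - s x) powr a x))
      \<longlongrightarrow> exp (- t) / (1 - t * exp (- t))) F"
    using assms mult_exp_minus_less_1[of t] by (intro tendsto_intros powr_one_minus_tendsto) auto
  moreover have "exp (- t) / (1 - t * exp (- t)) = 1 / (exp t - t)"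
    using exp_gt_self[of t] by (simp add: exp_minus field_simps)
  ultimately show ?thesis
    by (simp add: renewal_bound_def)
qed

lemma exit_prob_bounds:
  assumes P: "0 < P" "P < 1" and \<eta>: "0 < \<eta>" "\<eta> \<le> 1"
    and contraction: "(1/\<eta> + 1) * (1 - P) * P powr (1/\<eta> - 1) < 1"
  shows "renewal_bound (1/\<eta> + 1) (1/\<eta> - 1) P \<le> exit_prob \<eta> P 0"
    and "exit_prob \<eta> P 0 \<le> renewal_bound (1/\<eta> - 1) (1/\<eta> + 1) P"
proof -
  let ?eL = "P powr (1/\<eta> + 1)" and ?rL = "(1/\<eta> - 1) * (1 - P) * P powr (1/\<eta> + 1)"
  let ?eU = "P powr (1/\<eta> - 1)" and ?rU = "(1/\<eta> + 1) * (1 - P) * P powr (1/\<eta> - 1)"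
  have bdd: "bdd_below (exit_prob \<eta> P ` A)" "bdd_above (exit_prob \<eta> P ` A)" for A
    using P exit_prob_nonneg[of P \<eta>] exit_prob_le_1[of P \<eta>]
    by (auto intro!: bdd_belowI2[where m = 0] bdd_aboveI2[where M = 1])
  have cycle: "\<exists>T\<in>{0..<\<eta>}. ?eL + ?rL * exit_prob \<eta> P T \<le> exit_prob \<eta> P x
      \<and> exit_prob \<eta> P x \<le> ?eU + ?rU * exit_prob \<eta> P T" if "x \<in> {0..<\<eta>}" for x
  proof -
    from that have "0 \<le> x" "x < \<eta>"
      by auto
    then obtain T where "0 \<le> T" "T < \<eta>" "?eL + ?rL * exit_prob \<eta> P T \<le> exit_prob \<eta> P x"
      "exit_prob \<eta> P x \<le> ?eU + ?rU * exit_prob \<eta> P T"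
      by (rule exit_prob_cycle_bounds[OF P \<eta>])
    then show ?thesis
      by auto
  qed
  have "1 \<le> 1/\<eta>"
    using \<eta> by simp
  then have "0 \<le> ?rL" "?rL \<le> ?rU" "0 \<le> ?rU"
    using P by (auto intro!: mult_mono powr_mono')
  show "renewal_bound (1/\<eta> + 1) (1/\<eta> - 1) P \<le> exit_prob \<eta> P 0"
    unfolding renewal_bound_def
    using \<eta> contraction \<open>0 \<le> ?rL\<close> \<open>?rL \<le> ?rU\<close> cycle
    by (intro fixpoint_le_of_affine_self_bound[OF bdd(1), where A = "{0..<\<eta>}"]) auto
  show "exit_prob \<eta> P 0 \<le> renewal_bound (1/\<eta> - 1) (1/\<eta> + 1) P"
    unfolding renewal_bound_def
    using \<eta> contraction \<open>0 \<le> ?rU\<close> cycle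
    by (intro le_fixpoint_of_affine_self_bound[OF bdd(2), where A = "{0..<\<eta>}"]) auto
qed

lemma exit_prob_tendsto:
  fixes s \<eta> :: "'a \<Rightarrow> real"
  assumes ratio: "((\<lambda>x. s x / \<eta> x) \<longlongrightarrow> t) F"
    and s: "(s \<longlongrightarrow> 0) F" and \<eta>: "(\<eta> \<longlongrightarrow> 0) F"
    and pos: "eventually (\<lambda>x. 0 < s x \<and> 0 < \<eta> x) F"
  shows "((\<lambda>x. exit_prob (\<eta> x) (1 - s x) 0) \<longlongrightarrow> 1 / (exp t - t)) F"
proof -
  have plus: "((\<lambda>x. (1 / \<eta> x + 1) * s x) \<longlongrightarrow> t) F"
    using tendsto_add[OF ratio s] by (simp add: distrib_right)
  have minus: "((\<lambda>x. (1 / \<eta> x - 1) * s x) \<longlongrightarrow> t) F"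
    using tendsto_diff[OF ratio s] by (simp add: left_diff_distrib)
  have s_pos: "eventually (\<lambda>x. 0 < s x) F"
    using pos by (rule eventually_mono) simp
  have "t * exp (- t) < 1"
    by (rule mult_exp_minus_less_1)
  moreover have "((\<lambda>x. (1 / \<eta> x + 1) * s x * (1 - s x) powr (1 / \<eta> x - 1)) \<longlongrightarrow> t * exp (- t)) F"
    by (intro tendsto_mult plus powr_one_minus_tendsto minus s s_pos)
  ultimately have contraction:
    "eventually (\<lambda>x. (1 / \<eta> x + 1) * (1 - (1 - s x)) * (1 - s x) powr (1 / \<eta> x - 1) < 1) F"
    by (simp add: order_tendstoD(2))
  have small: "eventually (\<lambda>x. s x < 1 \<and> \<eta> x \<le> 1) F"
    using order_tendstoD(2)[OF s zero_less_one] order_tendstoD(2)[OF \<eta> zero_less_one]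
    by eventually_elim simp
  show ?thesis
  proof (rule tendsto_sandwich)
    show "eventually (\<lambda>x. renewal_bound (1 / \<eta> x + 1) (1 / \<eta> x - 1) (1 - s x)
        \<le> exit_prob (\<eta> x) (1 - s x) 0) F"
      using pos small contraction by eventually_elim (intro exit_prob_bounds; simp)
    show "eventually (\<lambda>x. exit_prob (\<eta> x) (1 - s x) 0
        \<le> renewal_bound (1 / \<eta> x - 1) (1 / \<eta> x + 1) (1 - s x)) F"
      using pos small contraction by eventually_elim (intro exit_prob_bounds; simp)
  qed (intro renewal_bound_tendsto plus minus s s_pos)+
qed

section \<open>The limit \<epsilon> \<rightarrow> 1\<close>

lemma eta_at_1: "eta p 1 = 0"
  by (simp add: eta_def aa_def bb_def)

lemma eta_pos:
  assumes "1/2 < p" "p < 1" "0 \<le> e" "e < 1"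
  shows "0 < eta p e"
proof -
  have "p * (1 - e) \<le> p"
    by (rule mult_left_le) (use assms in auto)
  then have "0 < 1 - bb p e"
    unfolding bb_def using assms by linarith
  moreover have "1 - bb p e < aa p e"
    using assms mult_strict_right_mono[of "1 - 2 * p" 0 "1 - e"]
    by (simp add: aa_def bb_def algebra_simps)
  moreover have "1 < alpha p"
    using assms by (simp add: alpha_def field_simps)
  ultimately show ?thesis
    by (simp add: eta_def)
qed

lemma eta_has_derivative_at_1:
  assumes "1/2 < p" "p < 1"
  shows "(eta p has_real_derivative (1 - 2 * p) / ln (alpha p)) (at 1)"
proof -
  have "1 < alpha p"
    using assms by (simp add: alpha_def field_simps)
  then show ?thesis
    unfolding eta_def[abs_def] aa_def bb_def using assms by (auto intro!: derivative_eq_intros)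
qed

lemma eta_tendsto_0:
  assumes "1/2 < p" "p < 1"
  shows "(eta p \<longlongrightarrow> 0) (at 1)"
  using DERIV_isCont[OF eta_has_derivative_at_1[OF assms]] by (simp add: isCont_def eta_at_1)

lemma one_minus_div_eta_tendsto:
  assumes "1/2 < p" "p < 1"
  shows "((\<lambda>e. (1 - e) / eta p e) \<longlongrightarrow> ln (alpha p) / (2 * p - 1)) (at 1)"
proof -
  have "1 < alpha p"
    using assms by (simp add: alpha_def field_simps)
  have "((\<lambda>e. (eta p e - eta p 1) / (e - 1)) \<longlongrightarrow> (1 - 2 * p) / ln (alpha p)) (at 1)"
    using eta_has_derivative_at_1[OF assms] by (simp add: has_field_derivative_iff)
  then have "((\<lambda>e. inverse (- ((eta p e - eta p 1) / (e - 1))))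
      \<longlongrightarrow> inverse (- ((1 - 2 * p) / ln (alpha p)))) (at 1)"
    using assms \<open>1 < alpha p\<close> by (intro tendsto_inverse tendsto_minus) auto
  moreover have "inverse (- ((eta p e - eta p 1) / (e - 1))) = (1 - e) / eta p e" for e
    by (simp add: eta_at_1 minus_divide_right)
  moreover have "inverse (- ((1 - 2 * p) / ln (alpha p))) = ln (alpha p) / (2 * p - 1)"
    by (simp add: minus_divide_left)
  ultimately show ?thesis
    by simp
qed

definition low_signal_prob :: "real \<Rightarrow> item_value \<Rightarrow> real" where
  "low_signal_prob p V = (case V of G \<Rightarrow> 1 - p | B \<Rightarrow> p)"

lemma pf_eq_low_signal_prob: "pf p \<epsilon> V = 1 - low_signal_prob p V * (1 - \<epsilon>)"
  by (cases V) (simp_all add: pf_def aa_def bb_def low_signal_prob_def algebra_simps)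

lemma low_signal_prob_pos: "0 < p \<Longrightarrow> p < 1 \<Longrightarrow> 0 < low_signal_prob p V"
  by (cases V) (simp_all add: low_signal_prob_def)

lemma cascade_exponent_eq:
  assumes "1/2 < p" "p < 1"
  shows "(case V of G \<Rightarrow> ln (alpha p) / (alpha p - 1) | B \<Rightarrow> alpha p * ln (alpha p) / (alpha p - 1))
    = low_signal_prob p V * (ln (alpha p) / (2 * p - 1))"
proof -
  have alpha_minus_1: "alpha p - 1 = (2 * p - 1) / (1 - p)"
    using assms(2) by (simp add: alpha_def field_simps)
  show ?thesis
  proof (cases V)
    case G
    then show ?thesis
      using assms by (simp add: low_signal_prob_def alpha_minus_1 field_simps)
  next
    case B
    have "alpha p * ln (alpha p) / (alpha p - 1) = alpha p * (1 - p) * (ln (alpha p) / (2 * p - 1))"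
      using assms by (simp add: alpha_minus_1 field_simps)
    also have "alpha p * (1 - p) = p"
      using assms(2) by (simp add: alpha_def)
    finally show ?thesis
      using B by (simp add: low_signal_prob_def)
  qed
qed

theorem mainTheorem6:
  fixes p :: real and V :: item_value
  assumes "1/2 < p" and "p < 1"
  defines "t \<equiv> (case V of G \<Rightarrow> ln (alpha p) / (alpha p - 1)
                         | B \<Rightarrow> alpha p * ln (alpha p) / (alpha p - 1))"
  shows "((\<lambda>\<epsilon>. PYcas p V \<epsilon>) \<longlongrightarrow> 1 / (exp t - t)) (at_left 1)"
proof -
  let ?c = "low_signal_prob p V"
  have "((\<lambda>\<epsilon>. ?c * ((1 - \<epsilon>) / eta p \<epsilon>)) \<longlongrightarrow> t) (at_left 1)"
    unfolding t_def cascade_exponent_eq[OF assms(1,2)] using one_minus_div_eta_tendsto[OF assms(1,2)]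
    by (intro tendsto_mult_left) (rule filterlim_within_subset, auto)
  moreover have "((\<lambda>\<epsilon>. ?c * (1 - \<epsilon>)) \<longlongrightarrow> 0) (at_left 1)"
    by (auto intro!: tendsto_eq_intros)
  moreover have "(eta p \<longlongrightarrow> 0) (at_left 1)"
    using eta_tendsto_0[OF assms(1,2)] by (rule filterlim_within_subset) auto
  moreover have "eventually (\<lambda>\<epsilon>. 0 < ?c * (1 - \<epsilon>) \<and> 0 < eta p \<epsilon>) (at_left 1)"
    using eventually_at_left_real[of 0 "1::real"] low_signal_prob_pos[of p V] eta_pos[OF assms(1,2)] assms
    by (auto elim!: eventually_mono)
  ultimately show ?thesis
    unfolding PYcas_eq_exit_prob pf_eq_low_signal_prob by (intro exit_prob_tendsto) simp_all
qed

end
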